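(* Let $n\ge1$, let $\mathbf u(z)\in\mathbb R^n$ be a column vector function, let $A$ be a constant real skew-symmetric $n\times n$ matrix, and let $\nu\ne0$ be a constant. Define block matrices of block size $(1,n)\times(1,n)$ \[ {\cal B}_0=\begin{pmatrix} 1-\nu & 0\\ 0 & I_n \end{pmatrix},\quad {\cal B}_1=\begin{pmatrix} 0 & \mathbf u^T\\ \mathbf u & 0 \end{pmatrix},\quad {\cal B}_2=\begin{pmatrix} (\mathbf u,\mathbf u) & -(\mathbf u')^T\\ \mathbf u' & -\mathbf u\mathbf u^T \end{pmatrix}, \] \[ {\cal B}_3=\begin{pmatrix} 0 & 2(\mathbf u,\mathbf u)\mathbf u^T\\ 2(\mathbf u,\mathbf u)\mathbf u & \mathbf u'\mathbf u^T-\mathbf u(\mathbf u')^T \end{pmatrix},\quad {\cal A}_0=\begin{pmatrix} 0 & 0\\ 0 & A \end{pmatrix}, \] and \[ {\cal A}=-\nu^2\zeta(\zeta{\cal B}_0+{\cal B}_1)+z{\cal B}_0-\nu{\cal B}_2-\zeta^{-1}({\cal B}''_1-z{\cal B}_1-{\cal B}_3-{\cal A}_0),\qquad {\cal B}=\zeta{\cal B}_0+{\cal B}_1. \] Then the equation \[ \mathbf u'''= 3(\mathbf u,\mathbf u)\mathbf u'+3(\mathbf u,\mathbf u')\mathbf u+z\mathbf u'+\mathbf u+A\mathbf u \] admits the isomonodromic Lax representation ${\cal A}'={\cal B}_\zeta+[{\cal B},{\cal A}]$.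
   Context: Primes denote derivatives with respect to $z$; $\zeta$ is a spectral parameter independent of $z$; $(\cdot,\cdot)$ is the standard scalar product; $I_n$ the identity matrix. "Admits the Lax representation" means the matrix equation holds identically in $\zeta$ by virtue of the equation. *)

theory Defs
  imports "HOL-Analysis.Analysis"
begin

text \<open>The index type of the
(n+1) x (n+1) matrices is unit + 'n: the index Inl () is the first row/column,
the indices Inr i (i :: 'n) are the remaining n rows/columns.
blk a r c D is the block matrix with top-left entry a, top-right row r^T,
bottom-left column c and bottom-right n x n block D.\<close>

definition blk :: "real \<Rightarrow> real^'n \<Rightarrow> real^'n \<Rightarrow> real^'n::finite^'n \<Rightarrow> real^(unit + 'n)^(unit + 'n)" where
  "blk a r c D = (\<chi> i j. case i of
       Inl _ \<Rightarrow> (case j of Inl _ \<Rightarrow> a | Inr j' \<Rightarrow> r $ j')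
     | Inr i' \<Rightarrow> (case j of Inl _ \<Rightarrow> c $ i' | Inr j' \<Rightarrow> D $ i' $ j'))"

definition outer :: "real^'n::finite \<Rightarrow> real^'n \<Rightarrow> real^'n^'n" where
  "outer x y = (\<chi> i j. x $ i * y $ j)"

definition B0 :: "real \<Rightarrow> real^(unit + 'n::finite)^(unit + 'n)" where
  "B0 \<nu> = blk (1 - \<nu>) 0 0 (mat 1)"

definition B1 :: "real^'n::finite \<Rightarrow> real^(unit + 'n)^(unit + 'n)" where
  "B1 u = blk 0 u u 0"

text \<open>B2 u u' with u' the derivative of u\<close>
definition B2 :: "real^'n::finite \<Rightarrow> real^'n \<Rightarrow> real^(unit + 'n)^(unit + 'n)" where
  "B2 u u' = blk (u \<bullet> u) (- u') u' (- outer u u)"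

definition B3 :: "real^'n::finite \<Rightarrow> real^'n \<Rightarrow> real^(unit + 'n)^(unit + 'n)" where
  "B3 u u' = blk 0 ((2 * (u \<bullet> u)) *\<^sub>R u) ((2 * (u \<bullet> u)) *\<^sub>R u) (outer u' u - outer u u')"

definition A0 :: "real^'n::finite^'n \<Rightarrow> real^(unit + 'n)^(unit + 'n)" where
  "A0 A = blk 0 0 0 A"

text \<open>The matrix \<A> at the point z, given u(z), u'(z), u''(z).
Note B1'' = B1 (u'') since B1 is linear in u.\<close>
definition LaxA :: "real \<Rightarrow> real^'n::finite^'n \<Rightarrow> real \<Rightarrow> real \<Rightarrow> real^'n \<Rightarrow> real^'n \<Rightarrow> real^'n
                    \<Rightarrow> real^(unit + 'n)^(unit + 'n)" where
  "LaxA \<nu> A \<zeta> z u u1 u2 =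
     - (\<nu>\<^sup>2 * \<zeta>) *\<^sub>R (\<zeta> *\<^sub>R B0 \<nu> + B1 u) + z *\<^sub>R B0 \<nu> - \<nu> *\<^sub>R B2 u u1
     - (inverse \<zeta>) *\<^sub>R (B1 u2 - z *\<^sub>R B1 u - B3 u u1 - A0 A)"

definition LaxB :: "real \<Rightarrow> real \<Rightarrow> real^'n::finite \<Rightarrow> real^(unit + 'n)^(unit + 'n)" where
  "LaxB \<nu> \<zeta> u = \<zeta> *\<^sub>R B0 \<nu> + B1 u"

end

theory Submission
  imports Defs
begin

(*
  Write LaxA = -nu^2 zeta LaxB + z B0 - nu B2 - zeta^-1 C with C = B1'' - z B1 - B3 - A0.
  Since [LaxB, LaxB] = 0 and LaxB = zeta B0 + B1, the commutator [LaxB, LaxA] is a Laurent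
  polynomial in zeta with coefficients -nu [B0, B2] (at zeta), z [B1, B0] - nu [B1, B2] - [B0, C]
  (at 1) and -[B1, C] (at zeta^-1).  Comparing with the derivative of LaxA coefficient by
  coefficient leaves three block-matrix identities; only the last one uses the equation, and the
  skew-symmetry of A enters there through u^T A = -(A u)^T.
*)

lemma has_vector_derivative_vec_nth:
  fixes f :: "real \<Rightarrow> 'a::real_normed_vector^'m"
  assumes "(f has_vector_derivative f') F"
  shows "((\<lambda>t. f t $ i) has_vector_derivative f' $ i) F"
  using bounded_linear.has_vector_derivative[OF bounded_linear_vec_nth assms] .

lemma has_vector_derivative_componentwise_vec:
  fixes f :: "real \<Rightarrow> 'a::euclidean_space^'m"
  assumes "\<And>i. ((\<lambda>t. f t $ i) has_vector_derivative f' $ i) (at z within S)"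
  shows "(f has_vector_derivative f') (at z within S)"
proof -
  have "((\<lambda>t. f t $ i \<bullet> b) has_vector_derivative (f' $ i \<bullet> b)) (at z within S)" for i b
    using bounded_linear.has_vector_derivative[OF bounded_linear_inner_left assms] .
  then show ?thesis
    unfolding has_vector_derivative_def has_derivative_componentwise_within[of f]
    by (auto simp: Basis_vec_def inner_axis has_vector_derivative_def)
qed

lemma has_vector_derivative_outer:
  assumes "(x has_vector_derivative x') (at z within S)" "(y has_vector_derivative y') (at z within S)"
  shows "((\<lambda>t. outer (x t) (y t)) has_vector_derivative outer x' (y z) + outer (x z) y') (at z within S)"
proof (intro has_vector_derivative_componentwise_vec)
  fix i j
  have "((\<lambda>t. x t $ i * y t $ j) has_vector_derivative x z $ i * y' $ j + x' $ i * y z $ j) (at z within S)"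
    by (intro has_vector_derivative_mult has_vector_derivative_vec_nth assms)
  then show "((\<lambda>t. outer (x t) (y t) $ i $ j) has_vector_derivative
      (outer x' (y z) + outer (x z) y') $ i $ j) (at z within S)"
    by (simp add: outer_def algebra_simps)
qed

lemma has_vector_derivative_inner:
  fixes x y :: "real \<Rightarrow> 'a::real_inner"
  assumes "(x has_vector_derivative x') (at z within S)" "(y has_vector_derivative y') (at z within S)"
  shows "((\<lambda>t. x t \<bullet> y t) has_vector_derivative x z \<bullet> y' + x' \<bullet> y z) (at z within S)"
  using bounded_bilinear.has_vector_derivative[OF bounded_bilinear_inner assms] .

lemma vector_matrix_mult_outer: "x v* outer y w = (x \<bullet> y) *\<^sub>R w"
  by (simp add: vec_eq_iff vector_matrix_mult_def outer_def inner_vec_def sum_distrib_left algebra_simps)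

lemma matrix_vector_mult_outer: "outer y w *v x = (w \<bullet> x) *\<^sub>R y"
  by (simp add: vec_eq_iff matrix_vector_mult_def outer_def inner_vec_def sum_distrib_left algebra_simps)

lemma vector_matrix_mult_uminus: "x v* (- M) = - (x v* (M::'a::ring_1^'n^'m))"
  by (simp add: vec_eq_iff vector_matrix_mult_def sum_negf)

lemma matrix_vector_mult_uminus: "(- M) *v x = - ((M::'a::ring_1^'n^'m) *v x)"
  by (simp add: vec_eq_iff matrix_vector_mult_def sum_negf)

lemma outer_zero_left [simp]: "outer 0 y = 0"
  and outer_zero_right [simp]: "outer x 0 = 0"
  by (simp_all add: outer_def vec_eq_iff)

definition commutator :: "'a::ring_1^'n^'n \<Rightarrow> 'a^'n^'n \<Rightarrow> 'a^'n^'n" where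
  "commutator M N = M ** N - N ** M"

lemma commutator_self [simp]: "commutator M M = 0"
  by (simp add: commutator_def)

lemma commutator_add_left: "commutator (M + N) P = commutator M P + commutator N P"
  and commutator_add_right: "commutator P (M + N) = commutator P M + commutator P N"
  and commutator_diff_left: "commutator (M - N) P = commutator M P - commutator N P"
  and commutator_diff_right: "commutator P (M - N) = commutator P M - commutator P N"
  by (simp_all add: commutator_def vec_eq_iff matrix_matrix_mult_def sum.distrib sum_subtractf algebra_simps)

lemma commutator_scaleR_left: "commutator (c *\<^sub>R M) N = c *\<^sub>R commutator M (N::'a::real_algebra_1^'n^'n)"
  and commutator_scaleR_right: "commutator M (c *\<^sub>R N) = c *\<^sub>R commutator M (N::'a::real_algebra_1^'n^'n)"
  by (simp_all add: commutator_def vec_eq_iff matrix_matrix_mult_def scaleR_sum_right algebra_simps)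

lemmas commutator_simps = commutator_add_left commutator_add_right commutator_diff_left
  commutator_diff_right commutator_scaleR_left commutator_scaleR_right

lemma blk_nth [simp]:
  "blk a r c D $ Inl x $ Inl y = a" "blk a r c D $ Inl x $ Inr j = r $ j"
  "blk a r c D $ Inr i $ Inl y = c $ i" "blk a r c D $ Inr i $ Inr j = D $ i $ j"
  by (simp_all add: blk_def)

lemma blk_eqI:
  assumes "\<And>x y. M $ Inl x $ Inl y = a" "\<And>x j. M $ Inl x $ Inr j = r $ j"
    "\<And>i y. M $ Inr i $ Inl y = c $ i" "\<And>i j. M $ Inr i $ Inr j = D $ i $ j"
  shows "M = blk a r c D"
  unfolding vec_eq_iff
proof (intro allI)
  show "M $ i $ j = blk a r c D $ i $ j" for i j
    using assms by (cases i; cases j) auto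
qed

lemma blk_eq_blk_iff:
  "blk a r c D = blk a' r' c' D' \<longleftrightarrow> a = a' \<and> r = r' \<and> c = c' \<and> D = D'"
  by (metis blk_eqI blk_nth vec_eq_iff)

lemma blk_add: "blk a r c D + blk a' r' c' D' = blk (a + a') (r + r') (c + c') (D + D')"
  and blk_diff: "blk a r c D - blk a' r' c' D' = blk (a - a') (r - r') (c - c') (D - D')"
  and blk_uminus: "- blk a r c D = blk (- a) (- r) (- c) (- D)"
  and blk_scaleR: "s *\<^sub>R blk a r c D = blk (s * a) (s *\<^sub>R r) (s *\<^sub>R c) (s *\<^sub>R D)"
  by (rule blk_eqI; simp)+

lemma blk_mult:
  "blk a r c D ** blk a' r' c' D' =
     blk (a * a' + r \<bullet> c') (a *\<^sub>R r' + r v* D') (a' *\<^sub>R c + D *v c') (outer c r' + D ** D')"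
proof -
  have sum_Plus: "sum g UNIV = sum (g \<circ> Inl) UNIV + sum (g \<circ> Inr) UNIV"
    for g :: "unit + 'a \<Rightarrow> real"
    by (metis UNIV_Plus_UNIV finite sum.Plus)
  show ?thesis
    by (rule blk_eqI) (auto simp: matrix_matrix_mult_def sum_Plus inner_vec_def
        vector_matrix_mult_def matrix_vector_mult_def outer_def mult.commute)
qed

lemma commutator_blk:
  "commutator (blk a r c D) (blk a' r' c' D') =
     blk (r \<bullet> c' - r' \<bullet> c) (a *\<^sub>R r' + r v* D' - a' *\<^sub>R r - r' v* D)
       (a' *\<^sub>R c + D *v c' - a *\<^sub>R c' - D' *v c) (outer c r' + D ** D' - outer c' r - D' ** D)"
  by (simp add: commutator_def blk_mult blk_diff diff_diff_eq)

lemma has_vector_derivative_blk: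
  assumes "(a has_vector_derivative a') (at z within S)" "(r has_vector_derivative r') (at z within S)"
    "(c has_vector_derivative c') (at z within S)" "(D has_vector_derivative D') (at z within S)"
  shows "((\<lambda>t. blk (a t) (r t) (c t) (D t)) has_vector_derivative blk a' r' c' D') (at z within S)"
proof (intro has_vector_derivative_componentwise_vec)
  show "((\<lambda>t. blk (a t) (r t) (c t) (D t) $ i $ j) has_vector_derivative blk a' r' c' D' $ i $ j)
      (at z within S)" for i j
    using assms by (cases i; cases j) (auto intro!: has_vector_derivative_vec_nth)
qed

definition LaxA_pole :: "real^'n^'n \<Rightarrow> real \<Rightarrow> real^'n \<Rightarrow> real^'n \<Rightarrow> real^'n::finite
    \<Rightarrow> real^(unit + 'n)^(unit + 'n)" where
  "LaxA_pole A z u u1 u2 = B1 u2 - z *\<^sub>R B1 u - B3 u u1 - A0 A"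

lemma LaxA_eq:
  "LaxA \<nu> A \<zeta> z u u1 u2 = - (\<nu>\<^sup>2 * \<zeta>) *\<^sub>R LaxB \<nu> \<zeta> u + z *\<^sub>R B0 \<nu> - \<nu> *\<^sub>R B2 u u1
     - inverse \<zeta> *\<^sub>R LaxA_pole A z u u1 u2"
  by (simp add: LaxA_def LaxB_def LaxA_pole_def)

lemma commutator_LaxB_LaxA:
  assumes "\<zeta> \<noteq> 0"
  shows "commutator (LaxB \<nu> \<zeta> u) (LaxA \<nu> A \<zeta> z u u1 u2) =
     - (\<nu> * \<zeta>) *\<^sub>R commutator (B0 \<nu>) (B2 u u1)
     + (z *\<^sub>R commutator (B1 u) (B0 \<nu>) - \<nu> *\<^sub>R commutator (B1 u) (B2 u u1)
        - commutator (B0 \<nu>) (LaxA_pole A z u u1 u2))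
     - inverse \<zeta> *\<^sub>R commutator (B1 u) (LaxA_pole A z u u1 u2)"
proof -
  have "commutator (LaxB \<nu> \<zeta> u) (LaxA \<nu> A \<zeta> z u u1 u2) =
      z *\<^sub>R commutator (LaxB \<nu> \<zeta> u) (B0 \<nu>) - \<nu> *\<^sub>R commutator (LaxB \<nu> \<zeta> u) (B2 u u1)
      - inverse \<zeta> *\<^sub>R commutator (LaxB \<nu> \<zeta> u) (LaxA_pole A z u u1 u2)"
    by (simp add: LaxA_eq commutator_simps)
  then show ?thesis
    using assms by (simp add: LaxB_def commutator_simps algebra_simps)
qed

definition B2_deriv :: "real^'n \<Rightarrow> real^'n \<Rightarrow> real^'n::finite \<Rightarrow> real^(unit + 'n)^(unit + 'n)" where
  "B2_deriv u u1 u2 = blk (2 * (u \<bullet> u1)) (- u2) u2 (- (outer u1 u + outer u u1))"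

definition B3_deriv :: "real^'n \<Rightarrow> real^'n \<Rightarrow> real^'n::finite \<Rightarrow> real^(unit + 'n)^(unit + 'n)" where
  "B3_deriv u u1 u2 =
     blk 0 ((4 * (u \<bullet> u1)) *\<^sub>R u + (2 * (u \<bullet> u)) *\<^sub>R u1) ((4 * (u \<bullet> u1)) *\<^sub>R u + (2 * (u \<bullet> u)) *\<^sub>R u1)
       (outer u2 u - outer u u2)"

lemma has_vector_derivative_B1:
  "(u has_vector_derivative u') (at z within S) \<Longrightarrow>
    ((\<lambda>t. B1 (u t)) has_vector_derivative B1 u') (at z within S)"
  unfolding B1_def by (intro has_vector_derivative_blk has_vector_derivative_const)

lemma has_vector_derivative_B2:
  assumes u: "(u has_vector_derivative u1 z) (at z within S)"
    and u1: "(u1 has_vector_derivative u2) (at z within S)"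
  shows "((\<lambda>t. B2 (u t) (u1 t)) has_vector_derivative B2_deriv (u z) (u1 z) u2) (at z within S)"
proof -
  have "((\<lambda>t. u t \<bullet> u t) has_vector_derivative 2 * (u z \<bullet> u1 z)) (at z within S)"
    using has_vector_derivative_inner[OF u u] by (simp add: inner_commute)
  then show ?thesis
    unfolding B2_def B2_deriv_def
    by (intro has_vector_derivative_blk has_vector_derivative_minus has_vector_derivative_outer u u1)
qed

lemma has_vector_derivative_B3:
  assumes u: "(u has_vector_derivative u1 z) (at z within S)"
    and u1: "(u1 has_vector_derivative u2) (at z within S)"
  shows "((\<lambda>t. B3 (u t) (u1 t)) has_vector_derivative B3_deriv (u z) (u1 z) u2) (at z within S)"
proof -
  have "((\<lambda>t. u t \<bullet> u t) has_field_derivative 2 * (u z \<bullet> u1 z)) (at z within S)"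
    using has_vector_derivative_inner[OF u u]
    by (simp add: inner_commute has_real_derivative_iff_has_vector_derivative)
  then have "((\<lambda>t. (2 * (u t \<bullet> u t)) *\<^sub>R u t) has_vector_derivative
      (4 * (u z \<bullet> u1 z)) *\<^sub>R u z + (2 * (u z \<bullet> u z)) *\<^sub>R u1 z) (at z within S)"
    by (rule has_vector_derivative_eq_rhs[OF has_vector_derivative_scaleR[OF DERIV_cmult u]])
      (simp add: algebra_simps)
  moreover have "((\<lambda>t. outer (u1 t) (u t) - outer (u t) (u1 t)) has_vector_derivative
      outer u2 (u z) - outer (u z) u2) (at z within S)"
    by (rule has_vector_derivative_eq_rhs[OF has_vector_derivative_diff
          [OF has_vector_derivative_outer[OF u1 u] has_vector_derivative_outer[OF u u1]]]) simp
  ultimately show ?thesis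
    unfolding B3_def B3_deriv_def by (intro has_vector_derivative_blk has_vector_derivative_const)
qed

lemma has_vector_derivative_LaxA:
  assumes u: "(u has_vector_derivative u1 z) (at z within S)"
    and u1: "(u1 has_vector_derivative u2 z) (at z within S)"
    and u2: "(u2 has_vector_derivative u3) (at z within S)"
  shows "((\<lambda>t. LaxA \<nu> A \<zeta> t (u t) (u1 t) (u2 t)) has_vector_derivative
     B0 \<nu> - (\<nu>\<^sup>2 * \<zeta>) *\<^sub>R B1 (u1 z) - \<nu> *\<^sub>R B2_deriv (u z) (u1 z) (u2 z)
       - inverse \<zeta> *\<^sub>R (B1 u3 - B1 (u z) - z *\<^sub>R B1 (u1 z) - B3_deriv (u z) (u1 z) (u2 z)))
     (at z within S)"
  unfolding LaxA_def
  by (rule has_vector_derivative_eq_rhs, (rule derivative_intros has_vector_derivative_B1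
        has_vector_derivative_B2 has_vector_derivative_B3 u u1 u2)+)
    (simp add: algebra_simps)

lemma commutator_B0_B2: "commutator (B0 \<nu>) (B2 u u1) = \<nu> *\<^sub>R B1 u1"
  by (simp add: B0_def B1_def B2_def commutator_blk blk_scaleR blk_eq_blk_iff algebra_simps)

lemma commutator_Lax_constant_term:
  "z *\<^sub>R commutator (B1 u) (B0 \<nu>) - \<nu> *\<^sub>R commutator (B1 u) (B2 u u1)
     - commutator (B0 \<nu>) (LaxA_pole A z u u1 u2) = - \<nu> *\<^sub>R B2_deriv u u1 u2"
  unfolding B0_def B1_def B2_def B3_def A0_def LaxA_pole_def B2_deriv_def
  by (simp add: blk_add blk_diff blk_scaleR blk_uminus commutator_blk blk_eq_blk_iff
      vector_matrix_mult_outer matrix_vector_mult_outer vector_matrix_mult_uminus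
      matrix_vector_mult_uminus inner_commute)
    (simp add: vec_eq_iff outer_def algebra_simps)

lemma commutator_B1_LaxA_pole:
  assumes skew: "transpose A = - A"
    and ode: "u3 = (3 * (u \<bullet> u)) *\<^sub>R u1 + (3 * (u \<bullet> u1)) *\<^sub>R u + z *\<^sub>R u1 + u + A *v u"
  shows "commutator (B1 u) (LaxA_pole A z u u1 u2) = B1 u3 - B1 u - z *\<^sub>R B1 u1 - B3_deriv u u1 u2"
proof -
  have "u v* A = - (A *v u)"
    by (metis skew transpose_matrix_vector matrix_vector_mult_uminus)
  then show ?thesis
    by (simp add: B1_def B3_def A0_def LaxA_pole_def B3_deriv_def blk_diff blk_scaleR commutator_blk
        blk_eq_blk_iff ode vector_matrix_mult_outer matrix_vector_mult_outer inner_commute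
        vector_matrix_mult_diff_rdistrib matrix_vector_mult_diff_rdistrib)
      (simp add: vec_eq_iff outer_def algebra_simps)
qed

lemma Lax_equation:
  assumes skew: "transpose A = - A"
    and \<zeta>: "\<zeta> \<noteq> 0"
    and u: "(u has_vector_derivative u1 z) (at z within S)"
    and u1: "(u1 has_vector_derivative u2 z) (at z within S)"
    and u2: "(u2 has_vector_derivative u3 z) (at z within S)"
    and ode: "u3 z = (3 * (u z \<bullet> u z)) *\<^sub>R u1 z + (3 * (u z \<bullet> u1 z)) *\<^sub>R u z
      + z *\<^sub>R u1 z + u z + A *v u z"
  shows "((\<lambda>t. LaxA \<nu> A \<zeta> t (u t) (u1 t) (u2 t)) has_vector_derivative
    B0 \<nu> + commutator (LaxB \<nu> \<zeta> (u z)) (LaxA \<nu> A \<zeta> z (u z) (u1 z) (u2 z))) (at z within S)"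
proof -
  have lax: "B0 \<nu> + commutator (LaxB \<nu> \<zeta> (u z)) (LaxA \<nu> A \<zeta> z (u z) (u1 z) (u2 z)) =
      B0 \<nu> - (\<nu>\<^sup>2 * \<zeta>) *\<^sub>R B1 (u1 z) - \<nu> *\<^sub>R B2_deriv (u z) (u1 z) (u2 z)
        - inverse \<zeta> *\<^sub>R (B1 (u3 z) - B1 (u z) - z *\<^sub>R B1 (u1 z) - B3_deriv (u z) (u1 z) (u2 z))"
    unfolding commutator_LaxB_LaxA[OF \<zeta>] commutator_B0_B2 commutator_Lax_constant_term
      commutator_B1_LaxA_pole[OF skew ode]
    by (simp add: power2_eq_square algebra_simps)
  show ?thesis
    unfolding lax by (rule has_vector_derivative_LaxA[OF u u1 u2])
qed

theorem mainTheorem11: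
  fixes u u1 u2 u3 :: "real \<Rightarrow> real^'n" and A :: "real^'n^'n"
    and \<nu> :: real and S :: "real set"
  assumes skew: "transpose A = - A"
    and nu: "\<nu> \<noteq> 0"
    and S: "open S"
    and d1: "\<And>z. z \<in> S \<Longrightarrow> (u has_vector_derivative u1 z) (at z)"
    and d2: "\<And>z. z \<in> S \<Longrightarrow> (u1 has_vector_derivative u2 z) (at z)"
    and d3: "\<And>z. z \<in> S \<Longrightarrow> (u2 has_vector_derivative u3 z) (at z)"
    and eq: "\<And>z. z \<in> S \<Longrightarrow>
       u3 z = (3 * (u z \<bullet> u z)) *\<^sub>R u1 z + (3 * (u z \<bullet> u1 z)) *\<^sub>R u z
              + z *\<^sub>R u1 z + u z + A *v u z"
  shows "\<forall>\<zeta>::real. \<zeta> \<noteq> 0 \<longrightarrow> (\<forall>z\<in>S.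
     ((\<lambda>t. LaxA \<nu> A \<zeta> t (u t) (u1 t) (u2 t)) has_vector_derivative
        (B0 \<nu> + (LaxB \<nu> \<zeta> (u z) ** LaxA \<nu> A \<zeta> z (u z) (u1 z) (u2 z)
                 - LaxA \<nu> A \<zeta> z (u z) (u1 z) (u2 z) ** LaxB \<nu> \<zeta> (u z)))) (at z))"
  unfolding commutator_def[symmetric]
  by (blast intro: Lax_equation[OF skew] d1 d2 d3 eq)

end
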